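(* Let $X$ be a Banach space isomorphic to a uniformly convex Banach space. Then for every nonempty bounded closed convex $C\subset X$, every $\mathfrak{cm}$-nonexpansive map $T\colon C\to C$ has a fixed point.
   Context: For a bounded convex set $C$, a nonexpansive map $T\colon C\to C$ is $\mathfrak{cm}$-nonexpansive if for all $n\in\mathbb{N}$, $y\in C$ and sequences $(u_i)_{i=1}^\infty\subset C$: $\limsup_{i\to\infty}\sup_{A\subset\{1,\dots,n\}}\|\sum_{k\in A}(Tu_{i+k}-Ty)\|\le\limsup_{i\to\infty}\sup_{A\subset\{1,\dots,n\}}\|\sum_{k\in A}(u_{i+k}-y)\|$, where $\|\cdot\|$ is the norm of $X$. *)

theory Defs
  imports "HOL-Analysis.Analysis" "HOL-Library.Liminf_Limsup" "HOL-Library.Extended_Real"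
begin

definition uniformly_convex :: "'b::real_normed_vector itself \<Rightarrow> bool" where
  "uniformly_convex _ \<longleftrightarrow>
     (\<forall>e>0. \<exists>d>0. \<forall>x y::'b. norm x \<le> 1 \<and> norm y \<le> 1 \<and> norm (x - y) \<ge> e
        \<longrightarrow> norm ((x + y) /\<^sub>R 2) \<le> 1 - d)"

definition linear_isomorphism :: "('a::real_normed_vector \<Rightarrow> 'b::real_normed_vector) \<Rightarrow> bool" where
  "linear_isomorphism L \<longleftrightarrow> bounded_linear L \<and> bij L \<and> bounded_linear (inv L)"

definition nonexpansive_on :: "'a::real_normed_vector set \<Rightarrow> ('a \<Rightarrow> 'a) \<Rightarrow> bool" where
  "nonexpansive_on C T \<longleftrightarrow> T ` C \<subseteq> C \<and> (\<forall>x\<in>C. \<forall>y\<in>C. norm (T x - T y) \<le> norm (x - y))"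

definition cm_sup :: "nat \<Rightarrow> (nat \<Rightarrow> 'a::real_normed_vector) \<Rightarrow> 'a \<Rightarrow> nat \<Rightarrow> real" where
  "cm_sup n u y i = Max ((\<lambda>A. norm (\<Sum>k\<in>A. (u (i + k) - y))) ` Pow {1..n})"

definition cm_nonexpansive :: "'a::real_normed_vector set \<Rightarrow> ('a \<Rightarrow> 'a) \<Rightarrow> bool" where
  "cm_nonexpansive C T \<longleftrightarrow> nonexpansive_on C T \<and>
     (\<forall>n::nat. \<forall>y\<in>C. \<forall>u::nat \<Rightarrow> 'a. range u \<subseteq> C \<longrightarrow>
        limsup (\<lambda>i. ereal (cm_sup n (\<lambda>j. T (u j)) (T y) i))
          \<le> limsup (\<lambda>i. ereal (cm_sup n u y i)))"

end

theory Submission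
  imports Defs "HOL-Library.Ramsey"
begin

text \<open>Uniform convexity enters through Ramsey's theorem. Given a bounded sequence and \<open>\<epsilon> > 0\<close>,
  colour the \<open>2m\<close>-subsets of an infinite index set by whether every split into two \<open>m\<close>-blocks
  has \<open>\<epsilon> m\<close>-close sums. Passing to a homogeneous infinite subset, either all disjoint
  \<open>m\<close>-blocks are close, or uniform convexity shrinks the bound on the sums of \<open>2m\<close>-blocks by a
  fixed factor; the latter cannot happen forever. Once the blocks are close, the sums of
  \<open>u k - y\<close> over finite index sets \<open>A\<close> grow at most like \<open>\<epsilon> |A|\<close>, where \<open>y \<in> C\<close> is the
  mean of one block; this survives the passage through the isomorphism. For an approximate
  fixed point sequence \<open>u\<close>, cm-nonexpansiveness then gives \<open>\<parallel>T y - y\<parallel> \<le> 2 \<epsilon>\<close>. Nesting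
  the index sets as \<open>\<epsilon> \<rightarrow> 0\<close> makes these points a Cauchy sequence, and its limit is a
  fixed point.\<close>

definition convexity_modulus :: "'b::real_normed_vector itself \<Rightarrow> real \<Rightarrow> real \<Rightarrow> bool" where
  "convexity_modulus _ e d \<longleftrightarrow> (\<forall>R>0. \<forall>a b::'b. norm a \<le> R \<longrightarrow> norm b \<le> R \<longrightarrow>
     e * R \<le> norm (a - b) \<longrightarrow> norm (a + b) \<le> 2 * R * (1 - d))"

lemma convexity_modulusD:
  fixes a b :: "'b::real_normed_vector"
  assumes "convexity_modulus TYPE('b) e d"
    and "R > 0" "norm a \<le> R" "norm b \<le> R" "e * R \<le> norm (a - b)"
  shows "norm (a + b) \<le> 2 * R * (1 - d)"
  using assms unfolding convexity_modulus_def by blast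

lemma uniformly_convex_scaled:
  assumes "uniformly_convex TYPE('b::real_normed_vector)" and "e > 0"
  obtains d where "0 < d" "d \<le> 1/2" "convexity_modulus TYPE('b) e d"
proof -
  from assms obtain d0 where "d0 > 0" and d0: "\<forall>x y::'b. norm x \<le> 1 \<and> norm y \<le> 1 \<and> norm (x - y) \<ge> e
        \<longrightarrow> norm ((x + y) /\<^sub>R 2) \<le> 1 - d0"
    unfolding uniformly_convex_def by blast
  have scaled: "norm (v /\<^sub>R c) = norm v / c" if "c > 0" for v :: 'b and c
    using that by (simp add: divide_inverse_commute)
  define d where "d = min d0 (1/2)"
  have "norm (a + b) \<le> 2 * R * (1 - d)"
    if "R > 0" "norm a \<le> R" "norm b \<le> R" "e * R \<le> norm (a - b)" for a b :: 'b and R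
  proof -
    have "a /\<^sub>R R - b /\<^sub>R R = (a - b) /\<^sub>R R"
      by (simp add: algebra_simps)
    then have dist_scaled: "norm (a /\<^sub>R R - b /\<^sub>R R) = norm (a - b) / R"
      using scaled[OF \<open>R > 0\<close>] by metis
    have "e \<le> norm (a - b) / R"
      using that by (simp add: pos_le_divide_eq)
    then have "e \<le> norm (a /\<^sub>R R - b /\<^sub>R R)"
      unfolding dist_scaled .
    moreover have "norm (a /\<^sub>R R) \<le> 1" "norm (b /\<^sub>R R) \<le> 1"
      using that by (simp_all add: field_simps)
    moreover have mid: "(a /\<^sub>R R + b /\<^sub>R R) /\<^sub>R 2 = (a + b) /\<^sub>R (2 * R)"
      by (simp add: algebra_simps)
    ultimately have "norm ((a + b) /\<^sub>R (2 * R)) \<le> 1 - d0"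
      using d0 unfolding mid[symmetric] by blast
    moreover have "norm ((a + b) /\<^sub>R (2 * R)) = norm (a + b) / (2 * R)"
      using \<open>R > 0\<close> by (intro scaled) simp
    ultimately have "norm (a + b) / (2 * R) \<le> 1 - d0"
      by linarith
    then have "norm (a + b) \<le> (1 - d0) * (2 * R)"
      using \<open>R > 0\<close> by (simp add: pos_divide_le_eq)
    also have "\<dots> \<le> 2 * R * (1 - d)"
      using \<open>R > 0\<close> by (simp add: d_def)
    finally show ?thesis .
  qed
  then have "convexity_modulus TYPE('b) e d"
    unfolding convexity_modulus_def by blast
  moreover have "0 < d" "d \<le> 1/2"
    using \<open>d0 > 0\<close> by (auto simp: d_def)
  ultimately show ?thesis
    using that by blast
qed

lemma Ramsey_homogeneous_pred:
  assumes "infinite Z"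
  obtains Y where "Y \<subseteq> Z" "infinite Y"
    "(\<forall>X\<subseteq>Y. finite X \<and> card X = r \<longrightarrow> P X) \<or> (\<forall>X\<subseteq>Y. finite X \<and> card X = r \<longrightarrow> \<not> P X)"
proof -
  define f where "f X = (if P X then 0 else 1::nat)" for X
  have P_iff: "P X \<longleftrightarrow> f X = 0" for X
    by (simp add: f_def)
  have f_lt: "\<forall>X. X \<subseteq> Z \<and> finite X \<and> card X = r \<longrightarrow> f X < 2"
    by (simp add: f_def)
  obtain Y t where Y: "Y \<subseteq> Z" "infinite Y" and "t < 2"
    and hom: "\<forall>X. X \<subseteq> Y \<and> finite X \<and> card X = r \<longrightarrow> f X = t"
    using Ramsey[OF assms f_lt] by blast
  have "(\<forall>X\<subseteq>Y. finite X \<and> card X = r \<longrightarrow> P X) \<or> (\<forall>X\<subseteq>Y. finite X \<and> card X = r \<longrightarrow> \<not> P X)"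
    using hom unfolding P_iff by (cases "t = 0") auto
  then show ?thesis
    using that Y by blast
qed

definition blocks_close :: "('i \<Rightarrow> 'b::real_normed_vector) \<Rightarrow> real \<Rightarrow> 'i set \<Rightarrow> nat \<Rightarrow> bool" where
  "blocks_close w \<epsilon> Y m \<longleftrightarrow> (\<forall>A B. A \<subseteq> Y \<longrightarrow> B \<subseteq> Y \<longrightarrow> card A = m \<longrightarrow> card B = m \<longrightarrow>
      A \<inter> B = {} \<longrightarrow> norm (sum w A - sum w B) < \<epsilon> * m)"

definition block_sums_bounded :: "('i \<Rightarrow> 'b::real_normed_vector) \<Rightarrow> 'i set \<Rightarrow> nat \<Rightarrow> real \<Rightarrow> bool" where
  "block_sums_bounded w Y m r \<longleftrightarrow> (\<forall>A\<subseteq>Y. card A = m \<longrightarrow> norm (sum w A) \<le> m * r)"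

lemma blocks_close_if_block_sums_bounded:
  assumes "block_sums_bounded w Y m r" "2 * r < \<epsilon>" "m > 0"
  shows "blocks_close w \<epsilon> Y m"
  unfolding blocks_close_def
proof (intro allI impI)
  fix A B assume "A \<subseteq> Y" "B \<subseteq> Y" "card A = m" "card B = m"
  then have "norm (sum w A - sum w B) \<le> norm (sum w A) + norm (sum w B)"
    by (simp add: norm_triangle_ineq4)
  also have "\<dots> \<le> m * r + m * r"
    using assms(1) \<open>A \<subseteq> Y\<close> \<open>B \<subseteq> Y\<close> \<open>card A = m\<close> \<open>card B = m\<close>
    unfolding block_sums_bounded_def by (intro add_mono) auto
  also have "\<dots> < \<epsilon> * m"
    using assms(2,3) by (simp add: algebra_simps)
  finally show "norm (sum w A - sum w B) < \<epsilon> * m" .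
qed

lemma norm_block_sum_contract_if_not_blocks_close:
  fixes w :: "'i \<Rightarrow> 'b::real_normed_vector"
  assumes modulus: "convexity_modulus TYPE('b) e d"
    and "e * r \<le> \<epsilon>" "r > 0" "m > 0" "block_sums_bounded w Y m r"
    and "X \<subseteq> Y" "card X = 2 * m" "\<not> blocks_close w \<epsilon> X m"
  shows "norm (sum w X) \<le> real (2 * m) * ((1 - d) * r)"
proof -
  obtain A B where AB: "A \<subseteq> X" "B \<subseteq> X" "card A = m" "card B = m" "A \<inter> B = {}"
    and far: "\<not> norm (sum w A - sum w B) < \<epsilon> * m"
    using assms(8) unfolding blocks_close_def by blast
  have fin: "finite A" "finite B" "finite X"
    using AB \<open>card X = 2 * m\<close> \<open>m > 0\<close> card_ge_0_finite by auto
  have "e * (m * r) = (e * r) * m"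
    by (simp add: algebra_simps)
  also have "\<dots> \<le> \<epsilon> * m"
    using \<open>e * r \<le> \<epsilon>\<close> by (simp add: mult_right_mono)
  also have "\<dots> \<le> norm (sum w A - sum w B)"
    using far by simp
  finally have "norm (sum w A + sum w B) \<le> 2 * (m * r) * (1 - d)"
    using AB assms(5,6) \<open>r > 0\<close> \<open>m > 0\<close> unfolding block_sums_bounded_def
    by (intro convexity_modulusD[OF modulus]) auto
  moreover have "X = A \<union> B"
    using AB fin \<open>card X = 2 * m\<close> by (intro card_subset_eq[symmetric]) (auto simp: card_Un_disjoint)
  then have "sum w X = sum w A + sum w B"
    using AB fin by (simp add: sum.union_disjoint)
  ultimately show ?thesis
    by (simp add: algebra_simps)
qed

lemma blocks_close_or_block_sums_contract:
  fixes w :: "'i \<Rightarrow> 'b::real_normed_vector"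
  assumes modulus: "convexity_modulus TYPE('b) e d"
    and "e * r \<le> \<epsilon>" "r > 0" "m > 0" "infinite Y" "block_sums_bounded w Y m r"
  obtains Y' where "Y' \<subseteq> Y" "infinite Y'"
    "blocks_close w \<epsilon> Y' m \<or> block_sums_bounded w Y' (2 * m) ((1 - d) * r)"
proof -
  obtain Y' where Y': "Y' \<subseteq> Y" "infinite Y'" and
    hom: "(\<forall>X\<subseteq>Y'. finite X \<and> card X = 2 * m \<longrightarrow> blocks_close w \<epsilon> X m)
       \<or> (\<forall>X\<subseteq>Y'. finite X \<and> card X = 2 * m \<longrightarrow> \<not> blocks_close w \<epsilon> X m)"
    using Ramsey_homogeneous_pred[OF \<open>infinite Y\<close>, of "2 * m" "\<lambda>X. blocks_close w \<epsilon> X m"] by blast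
  have fin: "finite A" if "card A = m" for A :: "'i set"
    using that \<open>m > 0\<close> card_ge_0_finite by blast
  have "blocks_close w \<epsilon> Y' m \<or> block_sums_bounded w Y' (2 * m) ((1 - d) * r)"
    using hom
  proof
    assume close: "\<forall>X\<subseteq>Y'. finite X \<and> card X = 2 * m \<longrightarrow> blocks_close w \<epsilon> X m"
    have "blocks_close w \<epsilon> (A \<union> B) m"
      if "A \<subseteq> Y'" "B \<subseteq> Y'" "card A = m" "card B = m" "A \<inter> B = {}" for A B
      using close that fin by (simp add: card_Un_disjoint)
    then show ?thesis
      unfolding blocks_close_def by blast
  next
    assume far: "\<forall>X\<subseteq>Y'. finite X \<and> card X = 2 * m \<longrightarrow> \<not> blocks_close w \<epsilon> X m"
    have "norm (sum w X) \<le> real (2 * m) * ((1 - d) * r)" if "X \<subseteq> Y'" "card X = 2 * m" for X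
    proof -
      have "finite X"
        using that(2) \<open>m > 0\<close> by (intro card_ge_0_finite) simp
      then show ?thesis
        using far that Y'(1)
        by (intro norm_block_sum_contract_if_not_blocks_close[OF modulus assms(2,3,4,6)]) auto
    qed
    then show ?thesis
      unfolding block_sums_bounded_def by blast
  qed
  then show ?thesis
    using that Y' by blast
qed

lemma exists_blocks_close_or_block_sums_bounded_pow:
  fixes w :: "'i \<Rightarrow> 'b::real_normed_vector"
  assumes modulus: "convexity_modulus TYPE('b) e d"
    and d: "0 < d" "d \<le> 1/2" and "e \<ge> 0" "e * R \<le> \<epsilon>" "R > 0"
    and R: "\<And>i. norm (w i) \<le> R" and "infinite Y"
  shows "\<exists>Y'\<subseteq>Y. infinite Y' \<and> (\<exists>m>0. blocks_close w \<epsilon> Y' m \<or>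
      block_sums_bounded w Y' m ((1 - d) ^ k * R))"
proof (induction k)
  case 0
  have "block_sums_bounded w Y 1 R"
    using R by (auto simp: block_sums_bounded_def card_1_singleton_iff)
  then show ?case
    using \<open>infinite Y\<close> by auto
next
  case (Suc k)
  then obtain Y' m where Y': "Y' \<subseteq> Y" "infinite Y'" "m > 0"
    and "blocks_close w \<epsilon> Y' m \<or> block_sums_bounded w Y' m ((1 - d) ^ k * R)"
    by blast
  then consider "blocks_close w \<epsilon> Y' m" | "block_sums_bounded w Y' m ((1 - d) ^ k * R)"
    by blast
  then show ?case
  proof cases
    case 1
    then show ?thesis
      using Y' by blast
  next
    case 2
    have "(1 - d) ^ k * R \<le> R"
      using d \<open>R > 0\<close> by (simp add: power_le_one mult_le_cancel_right1)
    then have "e * ((1 - d) ^ k * R) \<le> \<epsilon>"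
      using \<open>e \<ge> 0\<close> \<open>e * R \<le> \<epsilon>\<close> by (meson mult_left_mono order_trans)
    moreover have "(1 - d) ^ k * R > 0"
      using d \<open>R > 0\<close> by simp
    ultimately obtain Y'' where "Y'' \<subseteq> Y'" "infinite Y''"
      and "blocks_close w \<epsilon> Y'' m \<or> block_sums_bounded w Y'' (2 * m) ((1 - d) * ((1 - d) ^ k * R))"
      using blocks_close_or_block_sums_contract[OF modulus _ _ \<open>m > 0\<close> \<open>infinite Y'\<close> 2] by blast
    moreover have "(1 - d) * ((1 - d) ^ k * R) = (1 - d) ^ Suc k * R"
      by simp
    ultimately have "Y'' \<subseteq> Y" "infinite Y''"
      "blocks_close w \<epsilon> Y'' m \<or> block_sums_bounded w Y'' (2 * m) ((1 - d) ^ Suc k * R)"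
      using Y' by auto
    moreover have "2 * m > 0"
      using \<open>m > 0\<close> by simp
    ultimately show ?thesis
      using \<open>m > 0\<close> by blast
  qed
qed

lemma exists_blocks_close:
  fixes w :: "'i \<Rightarrow> 'b::real_normed_vector"
  assumes "uniformly_convex TYPE('b)" "bounded (range w)" "\<epsilon> > 0" "infinite Y"
  obtains Y' m where "Y' \<subseteq> Y" "infinite Y'" "m > 0" "blocks_close w \<epsilon> Y' m"
proof -
  obtain R where "R > 0" and R: "\<And>i. norm (w i) \<le> R"
    using assms(2) unfolding bounded_pos by blast
  then have "\<epsilon> / R > 0"
    using \<open>\<epsilon> > 0\<close> by simp
  then obtain d where d: "0 < d" "d \<le> 1/2" and modulus: "convexity_modulus TYPE('b) (\<epsilon> / R) d"
    using uniformly_convex_scaled[OF assms(1)] by blast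
  obtain k where "(1 - d) ^ k < \<epsilon> / (2 * R)"
    using real_arch_pow_inv[of "\<epsilon> / (2 * R)" "1 - d"] d \<open>\<epsilon> > 0\<close> \<open>R > 0\<close> by auto
  then have small: "2 * ((1 - d) ^ k * R) < \<epsilon>"
    using \<open>R > 0\<close> by (simp add: field_simps)
  have "\<epsilon> / R \<ge> 0" "\<epsilon> / R * R \<le> \<epsilon>"
    using \<open>\<epsilon> / R > 0\<close> \<open>R > 0\<close> by simp_all
  then have "\<exists>Y'\<subseteq>Y. infinite Y' \<and> (\<exists>m>0. blocks_close w \<epsilon> Y' m \<or>
      block_sums_bounded w Y' m ((1 - d) ^ k * R))"
    by (rule exists_blocks_close_or_block_sums_bounded_pow[OF modulus d _ _ \<open>R > 0\<close> R \<open>infinite Y\<close>])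
  then obtain Y' m where Y': "Y' \<subseteq> Y" "infinite Y'" "m > 0"
    and "blocks_close w \<epsilon> Y' m \<or> block_sums_bounded w Y' m ((1 - d) ^ k * R)"
    by blast
  then have "blocks_close w \<epsilon> Y' m"
    using blocks_close_if_block_sums_bounded[OF _ small \<open>m > 0\<close>] by blast
  then show ?thesis
    using that Y' by blast
qed

text \<open>Peeling off \<open>m\<close>-blocks one at a time leaves fewer than \<open>m\<close> terms.\<close>
lemma norm_sum_le_by_blocks:
  fixes f :: "'i \<Rightarrow> 'b::real_normed_vector" and c R :: real
  assumes blocks: "\<And>B. B \<subseteq> Y \<Longrightarrow> card B = m \<Longrightarrow> norm (sum f B) \<le> c * m"
    and bound: "\<And>i. i \<in> Y \<Longrightarrow> norm (f i) \<le> R"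
    and "m > 0" "c \<ge> 0" "R \<ge> 0" "finite A" "A \<subseteq> Y"
  shows "norm (sum f A) \<le> c * card A + m * R"
  using \<open>finite A\<close> \<open>A \<subseteq> Y\<close>
proof (induction "card A" arbitrary: A rule: less_induct)
  case less
  show ?case
  proof (cases "card A < m")
    case True
    have "norm (sum f A) \<le> card A * R"
      using sum_norm_le[of A f "\<lambda>_. R"] bound less.prems by auto
    also have "\<dots> \<le> m * R"
      using True \<open>R \<ge> 0\<close> by (simp add: mult_right_mono)
    moreover have "0 \<le> c * card A"
      using \<open>c \<ge> 0\<close> by simp
    ultimately show ?thesis
      by linarith
  next
    case False
    then obtain B where B: "B \<subseteq> A" "card B = m"
      by (meson not_less obtain_subset_with_card_n)
    have "finite B"
      using B less.prems finite_subset by blast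
    have card_split: "card (A - B) + m = card A"
      using B \<open>finite B\<close> False by (simp add: card_Diff_subset)
    then have "card (A - B) < card A"
      using \<open>m > 0\<close> by linarith
    then have "norm (sum f (A - B)) \<le> c * card (A - B) + m * R"
      using less.prems by (intro less.hyps) auto
    moreover have "norm (sum f B) \<le> c * m"
      using B less.prems by (intro blocks) auto
    moreover have "sum f A = sum f (A - B) + sum f B"
      using B less.prems by (simp add: sum.subset_diff)
    ultimately have "norm (sum f A) \<le> c * (card (A - B) + m) + m * R"
      using norm_triangle_ineq[of "sum f (A - B)" "sum f B"] by (simp add: algebra_simps)
    then show ?thesis
      unfolding card_split .
  qed
qed

lemma convex_mean_mem:
  assumes "convex S" "finite A" "A \<noteq> {}" "\<And>i. i \<in> A \<Longrightarrow> w i \<in> S"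
  shows "sum w A /\<^sub>R card A \<in> S"
proof -
  have "(\<Sum>i\<in>A. (1 / card A) *\<^sub>R w i) \<in> S"
    using assms by (intro convex_sum) auto
  then show ?thesis
    by (simp add: scaleR_sum_right divide_inverse_commute)
qed

definition block_averages_near :: "('i \<Rightarrow> 'a::real_normed_vector) \<Rightarrow> 'i set \<Rightarrow> 'a \<Rightarrow> real \<Rightarrow> real \<Rightarrow> bool" where
  "block_averages_near u Y y \<epsilon> M \<longleftrightarrow>
     (\<forall>A. finite A \<longrightarrow> A \<subseteq> Y \<longrightarrow> norm (\<Sum>i\<in>A. u i - y) \<le> \<epsilon> * card A + M)"

lemma exists_block_averages_near_mean:
  fixes w :: "'i \<Rightarrow> 'b::real_normed_vector"
  assumes "uniformly_convex TYPE('b)" "bounded (range w)" "\<epsilon> > 0" "infinite Y"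
  obtains Y' A0 M where "Y' \<subseteq> Y" "infinite Y'" "A0 \<subseteq> Y'" "finite A0" "A0 \<noteq> {}"
    "block_averages_near w Y' (sum w A0 /\<^sub>R card A0) \<epsilon> M"
proof -
  obtain Y' m where Y': "Y' \<subseteq> Y" "infinite Y'" and "m > 0" and close: "blocks_close w (\<epsilon> / 2) Y' m"
    using exists_blocks_close[OF assms(1,2)] assms(3,4) by (metis half_gt_zero)
  obtain A0 where A0: "A0 \<subseteq> Y'" "finite A0" "card A0 = m"
    by (meson \<open>infinite Y'\<close> infinite_arbitrarily_large)
  then have "A0 \<noteq> {}"
    using \<open>m > 0\<close> by auto
  define y where "y = sum w A0 /\<^sub>R card A0"
  obtain R where "R > 0" and R: "\<And>i. norm (w i) \<le> R"
    using assms(2) unfolding bounded_pos by blast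
  have "y \<in> cball 0 R"
    unfolding y_def using R \<open>A0 \<noteq> {}\<close> A0 by (intro convex_mean_mem) auto
  then have bound: "norm (w i - y) \<le> 2 * R" for i
    using R[of i] norm_triangle_ineq4[of "w i" y] by simp
  have "norm (\<Sum>i\<in>A. w i - y) \<le> \<epsilon> * m" if A: "A \<subseteq> Y'" "card A = m" for A
  proof -
    have "finite A"
      using A \<open>m > 0\<close> card_ge_0_finite by blast
    then obtain B where B: "B \<subseteq> Y' - (A \<union> A0)" "card B = m"
      using \<open>infinite Y'\<close> A0 by (meson Diff_infinite_finite finite_UnI infinite_arbitrarily_large)
    then have "B \<subseteq> Y'" "A \<inter> B = {}" "A0 \<inter> B = {}"
      by auto
    then have "norm (sum w A - sum w B) < \<epsilon> / 2 * m" "norm (sum w A0 - sum w B) < \<epsilon> / 2 * m"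
      using close A A0 \<open>card B = m\<close> unfolding blocks_close_def by blast+
    moreover have "(\<Sum>i\<in>A. w i - y) = sum w A - sum w A0"
      using A A0 \<open>m > 0\<close> by (simp add: y_def sum_subtractf sum_constant_scaleR)
    moreover have "norm (sum w A - sum w A0) \<le> norm (sum w A - sum w B) + norm (sum w A0 - sum w B)"
      using norm_triangle_ineq4[of "sum w A - sum w B" "sum w A0 - sum w B"] by simp
    ultimately show ?thesis
      by simp
  qed
  then have "block_averages_near w Y' y \<epsilon> (m * (2 * R))"
    unfolding block_averages_near_def using bound \<open>m > 0\<close> \<open>\<epsilon> > 0\<close> \<open>R > 0\<close>
    by (intro allI impI norm_sum_le_by_blocks[where Y = Y']) auto
  then show ?thesis
    using that Y' A0 \<open>A0 \<noteq> {}\<close> unfolding y_def by blast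
qed

lemma linear_isomorphism_bounded_below:
  assumes "linear_isomorphism L"
  obtains K where "K > 0" "\<And>x. norm x \<le> K * norm (L x)"
proof -
  obtain K where "K > 0" and K: "\<And>z. norm (inv L z) \<le> norm z * K"
    using assms bounded_linear.pos_bounded unfolding linear_isomorphism_def by blast
  have "norm x \<le> K * norm (L x)" for x
    using K[of "L x"] assms bij_is_inj by (fastforce simp: linear_isomorphism_def mult.commute)
  then show ?thesis
    using that \<open>K > 0\<close> by blast
qed

lemma block_averages_near_linear_pullback:
  assumes "linear L" "\<And>x. norm x \<le> K * norm (L x)" "K \<ge> 0"
    and "block_averages_near (\<lambda>i. L (u i)) Y (L y) \<epsilon> M"
  shows "block_averages_near u Y y (K * \<epsilon>) (K * M)"
  unfolding block_averages_near_def
proof (intro allI impI)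
  fix A assume "finite A" "A \<subseteq> Y"
  have "L (\<Sum>i\<in>A. u i - y) = (\<Sum>i\<in>A. L (u i) - L y)"
    by (simp add: linear_sum[OF \<open>linear L\<close>] linear_diff[OF \<open>linear L\<close>])
  then have "norm (\<Sum>i\<in>A. u i - y) \<le> K * norm (\<Sum>i\<in>A. L (u i) - L y)"
    using assms(2) by metis
  also have "\<dots> \<le> K * (\<epsilon> * card A + M)"
    using assms(3,4) \<open>finite A\<close> \<open>A \<subseteq> Y\<close> unfolding block_averages_near_def
    by (simp add: mult_left_mono)
  finally show "norm (\<Sum>i\<in>A. u i - y) \<le> K * \<epsilon> * card A + K * M"
    by (simp add: algebra_simps)
qed

lemma exists_block_averages_near_in_convex:
  fixes L :: "'a::real_normed_vector \<Rightarrow> 'b::real_normed_vector" and u :: "'i \<Rightarrow> 'a"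
  assumes "linear_isomorphism L" "uniformly_convex TYPE('b)"
    and "convex C" "bounded C" "range u \<subseteq> C" "infinite Y" "\<epsilon> > 0"
  shows "\<exists>Y'\<subseteq>Y. infinite Y' \<and> (\<exists>y\<in>C. \<exists>M. block_averages_near u Y' y \<epsilon> M)"
proof -
  have "bounded_linear L"
    using assms(1) by (simp add: linear_isomorphism_def)
  then have "linear L"
    by (rule bounded_linear.linear)
  obtain K where "K > 0" and K: "\<And>x. norm x \<le> K * norm (L x)"
    using linear_isomorphism_bounded_below[OF assms(1)] by blast
  have "range (\<lambda>i. L (u i)) \<subseteq> L ` C"
    using assms(5) by auto
  then have "bounded (range (\<lambda>i. L (u i)))"
    by (rule bounded_subset[OF bounded_linear_image[OF assms(4) \<open>bounded_linear L\<close>]])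
  then obtain Y' A0 M where Y': "Y' \<subseteq> Y" "infinite Y'" and A0: "A0 \<subseteq> Y'" "finite A0" "A0 \<noteq> {}"
    and near: "block_averages_near (\<lambda>i. L (u i)) Y' ((\<Sum>i\<in>A0. L (u i)) /\<^sub>R card A0) (\<epsilon> / K) M"
    using exists_block_averages_near_mean[OF assms(2)] \<open>\<epsilon> > 0\<close> \<open>K > 0\<close> \<open>infinite Y\<close>
    by (metis divide_pos_pos)
  define y where "y = sum u A0 /\<^sub>R card A0"
  have "y \<in> C"
    unfolding y_def using assms(3,5) A0 by (intro convex_mean_mem) auto
  moreover have "(\<Sum>i\<in>A0. L (u i)) /\<^sub>R card A0 = L y"
    by (simp add: y_def linear_scale[OF \<open>linear L\<close>] linear_sum[OF \<open>linear L\<close>])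
  then have "block_averages_near (\<lambda>i. L (u i)) Y' (L y) (\<epsilon> / K) M"
    using near by simp
  then have "block_averages_near u Y' y (K * (\<epsilon> / K)) (K * M)"
    using \<open>K > 0\<close> by (intro block_averages_near_linear_pullback[OF \<open>linear L\<close> K]) simp_all
  then have "block_averages_near u Y' y \<epsilon> (K * M)"
    using \<open>K > 0\<close> by simp
  ultimately show ?thesis
    using Y' by blast
qed

lemma le_of_mult_le_add_const:
  fixes a b c :: real
  assumes "\<And>n::nat. 0 < n \<Longrightarrow> real n * a \<le> real n * b + c"
  shows "a \<le> b"
proof (rule ccontr)
  assume "\<not> a \<le> b"
  then obtain n :: nat where "c < n * (a - b)"
    using ex_less_of_nat_mult[of "a - b" c] by auto
  moreover have "n * (a - b) \<le> Suc n * (a - b)"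
    using \<open>\<not> a \<le> b\<close> by (intro mult_right_mono) auto
  ultimately have "c < Suc n * (a - b)"
    by linarith
  then show False
    using assms[of "Suc n"] by (simp add: algebra_simps)
qed

lemma block_averages_near_dist_le:
  assumes "block_averages_near u Y y \<epsilon> M" "block_averages_near u Y' y' \<epsilon>' M'"
    and "Y \<subseteq> Y'" "infinite Y"
  shows "dist y y' \<le> \<epsilon> + \<epsilon>'"
proof (rule le_of_mult_le_add_const[where c = "M + M'"])
  fix n :: nat
  obtain A where A: "A \<subseteq> Y" "finite A" "card A = n"
    using \<open>infinite Y\<close> infinite_arbitrarily_large by blast
  let ?S = "\<Sum>i\<in>A. u i - y" and ?S' = "\<Sum>i\<in>A. u i - y'"
  have "n *\<^sub>R (y' - y) = ?S - ?S'"
    using A by (simp add: sum_subtractf sum_constant_scaleR algebra_simps)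
  then have "n * dist y y' = norm (?S - ?S')"
    by (metis abs_of_nat dist_norm norm_minus_commute norm_scaleR)
  also have "\<dots> \<le> norm ?S + norm ?S'"
    by (rule norm_triangle_ineq4)
  also have "\<dots> \<le> (\<epsilon> * n + M) + (\<epsilon>' * n + M')"
    using assms(1,2) A \<open>Y \<subseteq> Y'\<close> unfolding block_averages_near_def
    by (intro add_mono) auto
  also have "\<dots> = n * (\<epsilon> + \<epsilon>') + (M + M')"
    by (simp add: algebra_simps)
  finally show "n * dist y y' \<le> n * (\<epsilon> + \<epsilon>') + (M + M')" .
qed

lemma norm_sum_le_cm_sup:
  "A \<subseteq> {1..n} \<Longrightarrow> norm (\<Sum>k\<in>A. u (i + k) - y) \<le> cm_sup n u y i"
  unfolding cm_sup_def by (rule Max_ge) auto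

lemma cm_sup_le_iff:
  "cm_sup n u y i \<le> c \<longleftrightarrow> (\<forall>A\<subseteq>{1..n}. norm (\<Sum>k\<in>A. u (i + k) - y) \<le> c)"
  unfolding cm_sup_def by (subst Max_le_iff) auto

lemma cm_sup_enumerate_le:
  assumes "block_averages_near u Y y \<epsilon> M" "infinite Y" "\<epsilon> \<ge> 0"
  shows "cm_sup n (\<lambda>j. u (enumerate Y j)) y i \<le> \<epsilon> * n + M"
  unfolding cm_sup_le_iff
proof (intro allI impI)
  fix A assume "A \<subseteq> {1..n}"
  then have "finite A"
    using finite_subset by blast
  have "card A \<le> n"
    using card_mono[OF finite_atLeastAtMost \<open>A \<subseteq> {1..n}\<close>] by simp
  define g where "g k = enumerate Y (i + k)" for k
  have inj: "inj_on g A"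
  proof (rule inj_onI)
    fix k l assume "g k = g l"
    then show "k = l"
      using injD[OF inj_enumerate[OF \<open>infinite Y\<close>], of "i + k" "i + l"] by (simp add: g_def)
  qed
  have "g ` A \<subseteq> Y"
    using enumerate_in_set[OF \<open>infinite Y\<close>] by (auto simp: g_def)
  have "(\<Sum>k\<in>A. u (enumerate Y (i + k)) - y) = (\<Sum>j\<in>g ` A. u j - y)"
    unfolding sum.reindex[OF inj] by (simp add: g_def)
  also have "norm \<dots> \<le> \<epsilon> * card (g ` A) + M"
    using assms(1) finite_imageI[OF \<open>finite A\<close>] \<open>g ` A \<subseteq> Y\<close> unfolding block_averages_near_def by blast
  also have "\<dots> = \<epsilon> * card A + M"
    by (simp add: card_image[OF inj])
  also have "\<dots> \<le> \<epsilon> * n + M"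
    using \<open>card A \<le> n\<close> \<open>\<epsilon> \<ge> 0\<close> by (simp add: mult_left_mono)
  finally show "norm (\<Sum>k\<in>A. u (enumerate Y (i + k)) - y) \<le> \<epsilon> * n + M" .
qed

lemma displacement_le_cm_sup:
  "n * norm (T y - y) \<le> cm_sup n u y i + cm_sup n (\<lambda>j. T (u j)) (T y) i
     + (\<Sum>k=1..n. norm (T (u (i + k)) - u (i + k)))"
proof -
  let ?S = "\<Sum>k=1..n. u (i + k) - y" and ?TS = "\<Sum>k=1..n. T (u (i + k)) - T y"
    and ?D = "\<Sum>k=1..n. T (u (i + k)) - u (i + k)"
  have "n *\<^sub>R (T y - y) = ?S - ?TS + ?D"
    by (simp add: sum_subtractf sum_constant_scaleR algebra_simps)
  then have "n * norm (T y - y) = norm (?S - ?TS + ?D)"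
    by (metis abs_of_nat norm_scaleR)
  also have "\<dots> \<le> norm ?S + norm ?TS + norm ?D"
    using norm_triangle_ineq[of "?S - ?TS" ?D] norm_triangle_ineq4[of ?S ?TS] by linarith
  also have "\<dots> \<le> cm_sup n u y i + cm_sup n (\<lambda>j. T (u j)) (T y) i
      + (\<Sum>k=1..n. norm (T (u (i + k)) - u (i + k)))"
    using norm_sum_le_cm_sup[of "{1..n}" n u i y] norm_sum_le_cm_sup[of "{1..n}" n "\<lambda>j. T (u j)" i "T y"]
    by (intro add_mono norm_sum) auto
  finally show ?thesis .
qed

lemma cm_nonexpansive_eventually_cm_sup_less:
  assumes "cm_nonexpansive C T" "range v \<subseteq> C" "y \<in> C" "\<And>i. cm_sup n v y i \<le> B"
  shows "eventually (\<lambda>i. cm_sup n (\<lambda>j. T (v j)) (T y) i < B + 1) sequentially"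
proof -
  have "limsup (\<lambda>i. ereal (cm_sup n (\<lambda>j. T (v j)) (T y) i)) \<le> limsup (\<lambda>i. ereal (cm_sup n v y i))"
    using assms(1-3) unfolding cm_nonexpansive_def by blast
  also have "\<dots> \<le> ereal B"
    using assms(4) by (intro Limsup_bounded always_eventually) simp
  also have "\<dots> < ereal (B + 1)"
    by simp
  finally have "eventually (\<lambda>i. ereal (cm_sup n (\<lambda>j. T (v j)) (T y) i) < ereal (B + 1)) sequentially"
    by (rule Limsup_lessD)
  then show ?thesis
    by simp
qed

text \<open>Along the subsequence indexed by \<open>Y\<close> the cm-condition carries the bound on the block sums
  around \<open>y\<close> over to the block sums of the images around \<open>T y\<close>; since \<open>u\<close> is an approximate
  fixed point sequence, the two differ by about \<open>n (T y - y)\<close>.\<close>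
lemma cm_nonexpansive_displacement_le:
  assumes cm: "cm_nonexpansive C T" and "range u \<subseteq> C" "(\<lambda>j. T (u j) - u j) \<longlonglongrightarrow> 0"
    and "infinite Y" "y \<in> C" "\<epsilon> \<ge> 0" "block_averages_near u Y y \<epsilon> M"
  shows "norm (T y - y) \<le> 2 * \<epsilon>"
proof (rule le_of_mult_le_add_const[where c = "2 * M + 2"])
  fix n :: nat assume "n > 0"
  define v where "v = (\<lambda>j. u (enumerate Y j))"
  have "range v \<subseteq> C"
    using assms(2) by (auto simp: v_def)
  have bound_v: "cm_sup n v y i \<le> \<epsilon> * n + M" for i
    unfolding v_def by (rule cm_sup_enumerate_le[OF assms(7,4,6)])
  have "eventually (\<lambda>i. cm_sup n (\<lambda>j. T (v j)) (T y) i < \<epsilon> * n + M + 1) sequentially"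
    by (rule cm_nonexpansive_eventually_cm_sup_less[OF cm \<open>range v \<subseteq> C\<close> \<open>y \<in> C\<close> bound_v])
  then obtain N1 where N1: "\<And>i. i \<ge> N1 \<Longrightarrow> cm_sup n (\<lambda>j. T (v j)) (T y) i < \<epsilon> * n + M + 1"
    unfolding eventually_sequentially by auto
  have "(\<lambda>j. T (v j) - v j) \<longlonglongrightarrow> 0"
    using LIMSEQ_subseq_LIMSEQ[OF assms(3) strict_mono_enumerate[OF \<open>infinite Y\<close>]]
    by (simp add: v_def comp_def)
  moreover have "1 / real n > 0"
    using \<open>n > 0\<close> by simp
  ultimately obtain N2 where N2: "\<And>j. j \<ge> N2 \<Longrightarrow> norm (T (v j) - v j) < 1 / n"
    unfolding LIMSEQ_iff by fastforce
  define i where "i = max N1 N2"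
  have "(\<Sum>k=1..n. norm (T (v (i + k)) - v (i + k))) \<le> (\<Sum>k=1..n. 1 / real n)"
    using N2 by (intro sum_mono less_imp_le) (simp add: i_def)
  also have "\<dots> = 1"
    using \<open>n > 0\<close> by simp
  finally have "n * norm (T y - y) \<le> (\<epsilon> * n + M) + (\<epsilon> * n + M + 1) + 1"
    using displacement_le_cm_sup[of n T y v i] bound_v[of i] N1[of i] by (simp add: i_def)
  moreover have "(\<epsilon> * n + M) + (\<epsilon> * n + M + 1) + 1 = n * (2 * \<epsilon>) + (2 * M + 2)"
    by (simp add: algebra_simps)
  ultimately show "n * norm (T y - y) \<le> n * (2 * \<epsilon>) + (2 * M + 2)"
    by linarith
qed

text \<open>A fixed point of the contraction \<open>x \<mapsto> s x\<^sub>0 + (1 - s) T x\<close> is moved by \<open>T\<close> only by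
  \<open>s \<parallel>T x - x\<^sub>0\<parallel> \<le> s diam C\<close>.\<close>
lemma nonexpansive_on_approx_fixpoint:
  fixes C :: "'a::banach set"
  assumes ne: "nonexpansive_on C T" and "C \<noteq> {}" "bounded C" "closed C" "convex C" "e > 0"
  shows "\<exists>x\<in>C. norm (T x - x) \<le> e"
proof -
  obtain R where "R > 0" and R: "\<And>x. x \<in> C \<Longrightarrow> norm x \<le> R"
    using \<open>bounded C\<close> unfolding bounded_pos by blast
  obtain x0 where "x0 \<in> C"
    using \<open>C \<noteq> {}\<close> by blast
  have TC: "\<And>x. x \<in> C \<Longrightarrow> T x \<in> C"
    and TL: "\<And>x y. x \<in> C \<Longrightarrow> y \<in> C \<Longrightarrow> norm (T x - T y) \<le> norm (x - y)"
    using ne unfolding nonexpansive_on_def by auto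
  define s where "s = min 1 (e / (2 * R))"
  have s: "0 < s" "s \<le> 1"
    using \<open>e > 0\<close> \<open>R > 0\<close> by (auto simp: s_def)
  have "s \<le> e / (2 * R)"
    by (simp add: s_def)
  then have "s * (2 * R) \<le> e"
    using \<open>R > 0\<close> by (simp add: pos_le_divide_eq)
  define f where "f x = s *\<^sub>R x0 + (1 - s) *\<^sub>R T x" for x
  have "f ` C \<subseteq> C"
    using convexD[OF \<open>convex C\<close> \<open>x0 \<in> C\<close> TC, of _ s "1 - s"] s by (auto simp: f_def)
  moreover have lip: "dist (f x) (f y) \<le> (1 - s) * dist x y" if "x \<in> C" "y \<in> C" for x y
  proof -
    have "f x - f y = (1 - s) *\<^sub>R (T x - T y)"
      by (simp add: f_def algebra_simps)
    then have "dist (f x) (f y) = (1 - s) * norm (T x - T y)"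
      using s by (simp add: dist_norm)
    also have "\<dots> \<le> (1 - s) * dist x y"
      using TL[OF that] s by (simp add: dist_norm mult_left_mono)
    finally show ?thesis .
  qed
  moreover have "complete C"
    using \<open>closed C\<close> by (simp add: complete_eq_closed)
  ultimately have "\<exists>!x\<in>C. f x = x"
    using s by (intro Banach_fix[OF \<open>complete C\<close> \<open>C \<noteq> {}\<close> _ _ \<open>f ` C \<subseteq> C\<close> lip]) auto
  then obtain x where "x \<in> C" "f x = x"
    by blast
  have "T x - x = T x - f x"
    using \<open>f x = x\<close> by simp
  also have "\<dots> = s *\<^sub>R (T x - x0)"
    by (simp add: f_def algebra_simps)
  finally have "norm (T x - x) = s * norm (T x - x0)"
    using s by simp
  also have "\<dots> \<le> s * (2 * R)"
    using norm_triangle_ineq4[of "T x" x0] R[OF TC[OF \<open>x \<in> C\<close>]] R[OF \<open>x0 \<in> C\<close>] s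
    by (intro mult_left_mono) auto
  also have "\<dots> \<le> e"
    by fact
  finally show ?thesis
    using \<open>x \<in> C\<close> by blast
qed

lemma nonexpansive_on_approx_fixpoint_seq:
  fixes C :: "'a::banach set"
  assumes "nonexpansive_on C T" "C \<noteq> {}" "bounded C" "closed C" "convex C"
  obtains u where "range u \<subseteq> C" "(\<lambda>j. T (u j) - u j) \<longlonglongrightarrow> 0"
proof -
  have "\<forall>j. \<exists>x\<in>C. norm (T x - x) \<le> inverse (Suc j)"
    using nonexpansive_on_approx_fixpoint[OF assms] by simp
  then obtain u where u: "\<And>j. u j \<in> C" "\<And>j. norm (T (u j) - u j) \<le> inverse (Suc j)"
    by metis
  have "(\<lambda>j. T (u j) - u j) \<longlonglongrightarrow> 0"
    by (rule Lim_null_comparison[OF always_eventually LIMSEQ_inverse_real_of_nat]) (use u(2) in blast)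
  then show ?thesis
    using that u(1) by blast
qed

lemma nonexpansive_on_fixpoint_of_limit:
  assumes "nonexpansive_on C T" "range x \<subseteq> C" "z \<in> C" "x \<longlonglongrightarrow> z" "(\<lambda>j. T (x j) - x j) \<longlonglongrightarrow> 0"
  shows "T z = z"
proof -
  have "\<forall>j. norm (T (x j) - T z) \<le> norm (x j - z)"
    using assms(1-3) unfolding nonexpansive_on_def by auto
  moreover have "(\<lambda>j. norm (x j - z)) \<longlonglongrightarrow> 0"
    using assms(4) by (intro tendsto_norm_zero LIM_zero)
  ultimately have "(\<lambda>j. T (x j) - T z) \<longlonglongrightarrow> 0"
    by (rule Lim_null_comparison[OF always_eventually])
  then have "(\<lambda>j. T (x j)) \<longlonglongrightarrow> T z"
    by (rule LIM_zero_cancel)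
  then have "(\<lambda>j. T (x j) - x j) \<longlonglongrightarrow> T z - z"
    using assms(4) by (rule tendsto_diff)
  then have "T z - z = 0"
    using assms(5) by (rule LIMSEQ_unique)
  then show ?thesis
    by simp
qed

lemma Cauchy_seq_of_block_averages_near:
  fixes u :: "nat \<Rightarrow> 'a::real_normed_vector"
  assumes step: "\<And>Y \<epsilon>. infinite Y \<Longrightarrow> \<epsilon> > 0 \<Longrightarrow>
      \<exists>Y'\<subseteq>Y. infinite Y' \<and> (\<exists>y\<in>C. \<exists>M. block_averages_near u Y' y \<epsilon> M)"
  obtains ys Ys Ms where "Cauchy ys" "range ys \<subseteq> C" "\<And>j. infinite (Ys j)"
    "\<And>j. block_averages_near u (Ys j) (ys j) (inverse (Suc j)) (Ms j)"
proof -
  define P where "P j p \<longleftrightarrow> infinite (fst p) \<and> fst (snd p) \<in> C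
      \<and> block_averages_near u (fst p) (fst (snd p)) (inverse (Suc j)) (snd (snd p))"
    for j and p :: "nat set \<times> 'a \<times> real"
  have "\<exists>p. P 0 p"
    using step[of UNIV 1] unfolding P_def by auto
  moreover have "\<exists>q. P (Suc j) q \<and> fst q \<subseteq> fst p" if "P j p" for j p
    using step[of "fst p" "inverse (Suc (Suc j))"] that unfolding P_def by force
  ultimately obtain p where p: "\<And>j. P j (p j)" and nested: "\<And>j. fst (p (Suc j)) \<subseteq> fst (p j)"
    using dependent_nat_choice[of P "\<lambda>_ p q. fst q \<subseteq> fst p"] by blast
  define Ys where "Ys j = fst (p j)" for j
  define ys where "ys j = fst (snd (p j))" for j
  have near: "block_averages_near u (Ys j) (ys j) (inverse (Suc j)) (snd (snd (p j)))"
    and Ys_inf: "infinite (Ys j)" for j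
    using p unfolding P_def Ys_def ys_def by auto
  have dist_le: "dist (ys k) (ys j) \<le> 2 * inverse (Suc j)" if "j \<le> k" for j k
  proof -
    have "Ys k \<subseteq> Ys j"
      using lift_Suc_antimono_le[of Ys, OF _ that] nested unfolding Ys_def by blast
    then have "dist (ys k) (ys j) \<le> inverse (Suc k) + inverse (Suc j)"
      using block_averages_near_dist_le[OF near near _ Ys_inf] by blast
    also have "\<dots> \<le> 2 * inverse (Suc j)"
      using that by (simp add: le_imp_inverse_le)
    finally show ?thesis .
  qed
  have "Cauchy ys"
    unfolding Cauchy_altdef2
  proof (intro allI impI)
    fix e :: real assume "e > 0"
    then obtain N where "inverse (real (Suc N)) < e / 2"
      using reals_Archimedean half_gt_zero by blast
    have "dist (ys n) (ys N) < e" if "N \<le> n" for n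
      using dist_le[OF that] \<open>inverse (real (Suc N)) < e / 2\<close> by linarith
    then show "\<exists>N. \<forall>n\<ge>N. dist (ys n) (ys N) < e"
      by blast
  qed
  moreover have "range ys \<subseteq> C"
    using p unfolding P_def ys_def by auto
  ultimately show ?thesis
    by (rule that[OF _ _ Ys_inf near])
qed

theorem corollary4p9:
  fixes L :: "'a::banach \<Rightarrow> 'b::banach"
  assumes "linear_isomorphism L"
    and "uniformly_convex TYPE('b)"
  shows "\<forall>C::'a set. \<forall>T. C \<noteq> {} \<and> bounded C \<and> closed C \<and> convex C \<and> cm_nonexpansive C T
           \<longrightarrow> (\<exists>x\<in>C. T x = x)"
proof (intro allI impI)
  fix C :: "'a set" and T
  assume "C \<noteq> {} \<and> bounded C \<and> closed C \<and> convex C \<and> cm_nonexpansive C T"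
  then have C: "C \<noteq> {}" "bounded C" "closed C" "convex C" and cm: "cm_nonexpansive C T"
    and ne: "nonexpansive_on C T"
    by (auto simp: cm_nonexpansive_def)
  obtain u where u: "range u \<subseteq> C" "(\<lambda>j. T (u j) - u j) \<longlonglongrightarrow> 0"
    using nonexpansive_on_approx_fixpoint_seq[OF ne C] by blast
  have step: "\<exists>Y'\<subseteq>Y. infinite Y' \<and> (\<exists>y\<in>C. \<exists>M. block_averages_near u Y' y \<epsilon> M)"
    if "infinite Y" "\<epsilon> > 0" for Y \<epsilon>
    using exists_block_averages_near_in_convex[OF assms C(4,2) u(1) that] .
  obtain ys Ys Ms where "Cauchy ys" "range ys \<subseteq> C" "\<And>j. infinite (Ys j)"
    and near: "\<And>j. block_averages_near u (Ys j) (ys j) (inverse (Suc j)) (Ms j)"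
    by (rule Cauchy_seq_of_block_averages_near[OF step], assumption+) (rule that)
  have "\<forall>j. norm (T (ys j) - ys j) \<le> 2 * inverse (Suc j)"
    using cm_nonexpansive_displacement_le[OF cm u \<open>\<And>j. infinite (Ys j)\<close> _ _ near]
      \<open>range ys \<subseteq> C\<close> by auto
  moreover have "(\<lambda>j. 2 * inverse (real (Suc j))) \<longlonglongrightarrow> 0"
    by (rule tendsto_mult_right_zero[OF LIMSEQ_inverse_real_of_nat])
  ultimately have "(\<lambda>j. T (ys j) - ys j) \<longlonglongrightarrow> 0"
    by (rule Lim_null_comparison[OF always_eventually])
  moreover obtain z where "z \<in> C" "ys \<longlonglongrightarrow> z"
    using \<open>Cauchy ys\<close> \<open>range ys \<subseteq> C\<close> C(3) complete_eq_closed unfolding complete_def by blast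
  ultimately show "\<exists>x\<in>C. T x = x"
    using nonexpansive_on_fixpoint_of_limit[OF ne \<open>range ys \<subseteq> C\<close>] by blast
qed

end
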